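(* Let $\mathbb{T}_S$ be a spherically symmetric tree with origin $\mathcal{O}$, and consider the cone percolation process on $\mathbb{T}_S$ with radius of influence $R$ satisfying $\mathbb{P}(R=k)=\frac{Z_\alpha}{(k+1)^\alpha}$ for $k=1,2,\dots$, where $\alpha>1$ and $Z_\alpha>0$ are constants. If $\dim\inf\partial\mathbb{T}_S>0$, then $\mathbb{P}(V)>0$.
   Context: Cone percolation process: Let $\mathbb{T}$ be a tree with origin $\mathcal{O}$ and graph distance $d(\cdot,\cdot)$. Write $u\le v$ if $u$ lies on the path from $\mathcal{O}$ to $v$. Let $R$ be a random variable with values in $\{0,1,2,\dots\}$, $p_k=\mathbb{P}(R=k)$, and assume $p_0\in(0,1)$. Let $\{R_v\}$ be i.i.d. copies of $R$ indexed by the vertices. For each vertex $u$ let $B_u=\{v: u\le v,\ d(u,v)\le R_u\}$. Set $I_0=\{\mathcal{O}\}$, $I_{n+1}=\bigcup_{u\in I_n}B_u$, $I=\bigcup_n I_n$; survival is the event $V=\{|I|=\infty\}$. A tree is spherically symmetric if any two vertices at the same distance from $\mathcal{O}$ have the same degree. For a vertex $u$ and $n\ge1$, $M_n(u)=|\{v: u\le v,\ d(v,\mathcal{O})=d(u,\mathcal{O})+n\}|$, and $\dim\inf\partial\mathbb{T}:=\lim_{n\to\infty}\min_{v}\frac1n\ln M_n(v)$ (assumed to exist). *)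

theory Defs
  imports "HOL-Probability.Probability" "HOL-Library.Sublist"
begin

text \<open>Vertices are finite lists of child indices; the origin is the empty list.
  u \<le> v in the tree order is prefix u v; the graph distance between u and a
  descendant v is length v - length u.\<close>

text \<open>Spherically symmetric tree: every vertex at distance i from the origin has
  exactly c i children (so all vertices at the same level have the same degree).\<close>
definition ssym_tree :: "(nat \<Rightarrow> nat) \<Rightarrow> nat list set" where
  "ssym_tree c = {xs. \<forall>i<length xs. xs ! i < c i}"

definition M_desc :: "nat list set \<Rightarrow> nat \<Rightarrow> nat list \<Rightarrow> nat" where
  "M_desc T n u = card {v \<in> T. prefix u v \<and> length v = length u + n}"

text \<open>The sequence n \<mapsto> min_v (1/n) ln M_n(v); dim inf \<partial>T is its limit.\<close>
definition dim_inf_seq :: "nat list set \<Rightarrow> nat \<Rightarrow> real" where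
  "dim_inf_seq T n = (INF v\<in>T. ln (real (M_desc T n v)) / real n)"

definition cone :: "nat list set \<Rightarrow> nat list \<Rightarrow> nat \<Rightarrow> nat list set" where
  "cone T u r = {v \<in> T. prefix u v \<and> length v \<le> length u + r}"

primrec cp_gen :: "nat list set \<Rightarrow> (nat list \<Rightarrow> nat) \<Rightarrow> nat \<Rightarrow> nat list set" where
  "cp_gen T r 0 = {[]}"
| "cp_gen T r (Suc n) = (\<Union>u\<in>cp_gen T r n. cone T u (r u))"

definition cp_cluster :: "nat list set \<Rightarrow> (nat list \<Rightarrow> nat) \<Rightarrow> nat list set" where
  "cp_cluster T r = (\<Union>n. cp_gen T r n)"

end

theory Submission
  imports Defs "HOL-Real_Asymp.Real_Asymp"
begin

text \<open>Positive \<open>dim inf\<close> forces every level to branch and every window of \<open>N\<close> consecutive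
  levels to contain a level with at least two children. Prune the tree to branching at most two
  and cut it into blocks of lengths \<open>n_j = N (K + j)\<close>. A vertex at the start of block \<open>j\<close> then has
  at least \<open>2^(K + j)\<close> descendants at its end, and all of them have radius below \<open>n_(j+1)\<close> with
  probability at most \<open>exp (- P(R = n_(j+1)) 2^(K + j))\<close>. The block starts at level at most
  \<open>N (K + j)^2\<close>, hence has at most \<open>2^(N (K + j)^2)\<close> vertices; because \<open>P(R = n)\<close> decays only
  polynomially, the union bound over all these vertices and all blocks is at most
  \<open>P(R = n_0) / 2\<close> for large \<open>K\<close>. Outside this bad event an origin of radius \<open>n_0\<close> starts a relay
  in which some vertex reached in each block has a cone covering the next block.\<close>

section \<open>Counting vertices of spherically symmetric trees\<close>

lemma finite_card_lists_bounded:
  "finite {ys::nat list. length ys = n \<and> (\<forall>i<n. ys!i < f i)} \<and>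
   card {ys::nat list. length ys = n \<and> (\<forall>i<n. ys!i < f i)} = (\<Prod>i<n. f i)"
proof (induction n arbitrary: f)
  case 0
  have "{ys::nat list. length ys = 0 \<and> (\<forall>i<0. ys!i < f i)} = {[]}" by auto
  then show ?case by simp
next
  case (Suc n)
  let ?S = "{ys::nat list. length ys = n \<and> (\<forall>i<n. ys!i < f (Suc i))}"
  have eq: "{ys::nat list. length ys = Suc n \<and> (\<forall>i<Suc n. ys!i < f i)} =
      (\<lambda>(k,ys). k # ys) ` ({..<f 0} \<times> ?S)"
  proof (rule set_eqI, rule iffI)
    fix x assume x: "x \<in> {ys::nat list. length ys = Suc n \<and> (\<forall>i<Suc n. ys!i < f i)}"
    then obtain k ys where kys: "x = k # ys" by (cases x) auto
    have "k < f 0" using x kys by auto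
    moreover have "ys \<in> ?S" using x kys by fastforce
    ultimately show "x \<in> (\<lambda>(k,ys). k # ys) ` ({..<f 0} \<times> ?S)" using kys by force
  next
    fix x assume "x \<in> (\<lambda>(k,ys). k # ys) ` ({..<f 0} \<times> ?S)"
    then obtain k ys where "x = k # ys" "k < f 0" "ys \<in> ?S" by auto
    then show "x \<in> {ys::nat list. length ys = Suc n \<and> (\<forall>i<Suc n. ys!i < f i)}"
      by (auto simp: less_Suc_eq_0_disj)
  qed
  have inj: "inj_on (\<lambda>(k,ys). k # ys) ({..<f 0} \<times> ?S)" by (auto simp: inj_on_def)
  from Suc.IH[of "\<lambda>i. f (Suc i)"] have "finite ?S" "card ?S = (\<Prod>i<n. f (Suc i))" by auto
  then show ?case unfolding eq using inj
    by (simp add: card_image card_cartesian_product prod.lessThan_Suc_shift del: prod.lessThan_Suc)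
qed

lemma descendants_ssym_tree:
  assumes "u \<in> ssym_tree c"
  shows "{w \<in> ssym_tree c. prefix u w \<and> length w = length u + n} =
    (\<lambda>ys. u @ ys) ` {ys. length ys = n \<and> (\<forall>i<n. ys!i < c (length u + i))}"
proof (rule set_eqI, rule iffI)
  fix w assume w: "w \<in> {w \<in> ssym_tree c. prefix u w \<and> length w = length u + n}"
  then obtain zs where zs: "w = u @ zs" by (auto simp: prefix_def)
  have "zs!i < c (length u + i)" if "i < n" for i
    using w zs that by (auto simp: ssym_tree_def dest!: spec[of _ "length u + i"])
  then show "w \<in> (\<lambda>ys. u @ ys) ` {ys. length ys = n \<and> (\<forall>i<n. ys!i < c (length u + i))}"
    using w zs by auto
next
  fix w assume "w \<in> (\<lambda>ys. u @ ys) ` {ys. length ys = n \<and> (\<forall>i<n. ys!i < c (length u + i))}"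
  then obtain ys where ys: "w = u @ ys" "length ys = n" "\<forall>i<n. ys!i < c (length u + i)" by auto
  have "w ! i < c i" if i: "i < length w" for i
  proof (cases "i < length u")
    case True
    then show ?thesis using assms ys(1) by (simp add: nth_append ssym_tree_def)
  next
    case False
    then have "length u + (i - length u) = i" by simp
    moreover have "i - length u < n" using False ys i by auto
    then have "ys ! (i - length u) < c (length u + (i - length u))" using ys(3) by blast
    ultimately show ?thesis using False ys(1) by (simp add: nth_append)
  qed
  then show "w \<in> {w \<in> ssym_tree c. prefix u w \<and> length w = length u + n}"
    using ys by (auto simp: ssym_tree_def)
qed

lemma finite_card_descendants_ssym_tree:
  assumes "u \<in> ssym_tree c"
  shows "finite {w \<in> ssym_tree c. prefix u w \<and> length w = length u + n}"
    and "card {w \<in> ssym_tree c. prefix u w \<and> length w = length u + n} = (\<Prod>i<n. c (length u + i))"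
proof -
  have "inj_on (\<lambda>ys. u @ ys) X" for X by (auto simp: inj_on_def)
  with finite_card_lists_bounded[of n "\<lambda>i. c (length u + i)"]
  show "finite {w \<in> ssym_tree c. prefix u w \<and> length w = length u + n}"
    and "card {w \<in> ssym_tree c. prefix u w \<and> length w = length u + n} = (\<Prod>i<n. c (length u + i))"
    unfolding descendants_ssym_tree[OF assms] by (auto simp: card_image)
qed

lemma Nil_in_ssym_tree [simp]: "[] \<in> ssym_tree c"
  by (simp add: ssym_tree_def)

lemma finite_card_level_ssym_tree:
  "finite {w \<in> ssym_tree c. length w = n}"
  "card {w \<in> ssym_tree c. length w = n} = (\<Prod>i<n. c i)"
  using finite_card_descendants_ssym_tree[OF Nil_in_ssym_tree, of c n] by auto

lemma M_desc_ssym_tree: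
  "u \<in> ssym_tree c \<Longrightarrow> M_desc (ssym_tree c) n u = (\<Prod>i<n. c (length u + i))"
  unfolding M_desc_def by (rule finite_card_descendants_ssym_tree(2))

lemma infinite_subset_ssym_tree_iff:
  assumes "X \<subseteq> ssym_tree c"
  shows "infinite X \<longleftrightarrow> (\<forall>N. \<exists>v\<in>X. N \<le> length v)"
proof
  assume inf: "infinite X"
  show "\<forall>N. \<exists>v\<in>X. N \<le> length v"
  proof (rule ccontr)
    assume "\<not> (\<forall>N. \<exists>v\<in>X. N \<le> length v)"
    then obtain N where "\<forall>v\<in>X. length v < N" by (auto simp: not_le)
    then have "X \<subseteq> (\<Union>n<N. {v \<in> ssym_tree c. length v = n})" using assms by blast
    moreover have "finite (\<Union>n<N. {v \<in> ssym_tree c. length v = n})"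
      by (simp add: finite_card_level_ssym_tree(1))
    ultimately show False using inf finite_subset by blast
  qed
next
  assume unbounded: "\<forall>N. \<exists>v\<in>X. N \<le> length v"
  show "infinite X"
  proof
    assume "finite X"
    then obtain N where "\<forall>v\<in>X. length v < N" using finite_maxlen by blast
    with unbounded show False by (meson not_le)
  qed
qed

section \<open>Positive dimension forces branching\<close>

lemma M_desc_ge_2_if_dim_inf_seq_pos:
  assumes "0 < dim_inf_seq T n" "v \<in> T"
  shows "2 \<le> M_desc T n v"
proof -
  let ?f = "\<lambda>v. ln (real (M_desc T n v)) / real n"
  have ln_nonneg: "0 \<le> ln (real k)" for k :: nat by (cases "k = 0") auto
  have "bdd_below (?f ` T)"
    by (rule bdd_belowI[of _ 0]) (auto intro!: divide_nonneg_nonneg ln_nonneg)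
  then have "dim_inf_seq T n \<le> ?f v" unfolding dim_inf_seq_def by (rule cINF_lower[OF _ assms(2)])
  then have "0 < ln (real (M_desc T n v))"
    using assms(1) by (smt (verit) divide_nonpos_nonneg of_nat_0_le_iff)
  then have "1 < real (M_desc T n v)"
    using ln_gt_zero_iff[of "real (M_desc T n v)"] by (cases "M_desc T n v = 0") auto
  then show ?thesis by linarith
qed

lemma ssym_tree_branching_if_dim_inf_pos:
  assumes "dim_inf_seq (ssym_tree c) \<longlonglongrightarrow> L" "0 < L"
  shows "\<forall>i. 1 \<le> c i" and "\<exists>N. \<forall>D. \<exists>i<N. 2 \<le> c (D+i)"
proof -
  from order_tendstoD(1)[OF assms] obtain N
    where N: "\<And>n. N \<le> n \<Longrightarrow> 0 < dim_inf_seq (ssym_tree c) n"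
    by (auto simp: eventually_sequentially)
  show c1: "\<forall>i. 1 \<le> c i"
  proof (rule ccontr)
    assume "\<not> (\<forall>i. 1 \<le> c i)"
    then obtain i where "c i = 0" by (auto simp: not_le)
    then have "M_desc (ssym_tree c) (max N (Suc i)) [] = 0"
      unfolding M_desc_ssym_tree[OF Nil_in_ssym_tree] by (intro prod_zero) (auto intro!: bexI[of _ i])
    moreover have "2 \<le> M_desc (ssym_tree c) (max N (Suc i)) []"
      by (rule M_desc_ge_2_if_dim_inf_seq_pos[OF N]) simp_all
    ultimately show False by simp
  qed
  have "\<exists>i<max N 1. 2 \<le> c (D+i)" for D
  proof (rule ccontr)
    let ?u = "replicate D (0::nat)"
    assume "\<not> (\<exists>i<max N 1. 2 \<le> c (D+i))"
    then have "(\<Prod>k<max N 1. c (D+k)) = 1"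
      using c1 by (intro prod.neutral) (metis le_antisym lessThan_iff not_less_eq_eq one_add_one plus_1_eq_Suc)
    moreover have u: "?u \<in> ssym_tree c" using c1 by (auto simp: ssym_tree_def Suc_le_eq)
    then have "2 \<le> M_desc (ssym_tree c) (max N 1) ?u"
      by (intro M_desc_ge_2_if_dim_inf_seq_pos[OF N]) simp_all
    ultimately show False using M_desc_ssym_tree[OF u] by simp
  qed
  then show "\<exists>N. \<forall>D. \<exists>i<N. 2 \<le> c (D+i)" by blast
qed

lemma prod_ge_pow2_if_windows:
  fixes b :: "nat \<Rightarrow> nat"
  assumes b1: "\<forall>i. 1 \<le> b i" and windows: "\<forall>D. \<exists>i<N. 2 \<le> b (D+i)"
  shows "2^m \<le> (\<Prod>i<N*m. b (D+i))"
proof (induction m arbitrary: D)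
  case 0
  then show ?case by simp
next
  case (Suc m)
  have split: "(\<Prod>i<N + k. f i) = (\<Prod>i<N. f i) * (\<Prod>i<k. f (N+i))" for k and f :: "nat \<Rightarrow> nat"
    by (induction k) simp_all
  obtain i0 where i0: "i0 < N" "2 \<le> b (D+i0)" using windows by blast
  have "(\<Prod>i<N. b (D+i)) = b (D+i0) * (\<Prod>i\<in>{..<N} - {i0}. b (D+i))"
    using i0(1) by (simp add: prod.remove)
  moreover have "1 \<le> (\<Prod>i\<in>{..<N} - {i0}. b (D+i))"
    using b1 by (simp add: Suc_le_eq prod_pos)
  ultimately have "2 \<le> (\<Prod>i<N. b (D+i))" using i0(2) by (metis le_trans mult_le_mono nat_mult_1_right)
  moreover have "(\<Prod>i<N*Suc m. b (D+i)) = (\<Prod>i<N. b (D+i)) * (\<Prod>i<N*m. b ((D+N)+i))"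
    by (simp add: split add.assoc)
  ultimately show ?case using Suc.IH[of "D+N"] by (simp add: mult_le_mono)
qed

section \<open>Polynomial tails beat exponential branching\<close>

lemma polynomial_tail_beats_branching:
  fixes Z \<alpha> :: real and N :: nat
  assumes "0 < N" "0 < Z" "1 < \<alpha>"
  shows "\<forall>\<^sub>F x in sequentially. 2^(N*x^2) * exp (- (Z / (real (N*(x+1)) + 1) powr \<alpha> * 2^x))
           \<le> Z / (real (N*x) + 1) powr \<alpha> / 2^(x+2)"
proof -
  have "real N > 0" using assms(1) by simp
  then have "\<forall>\<^sub>F x in at_top. 2 powr (real N*x^2) * exp (- (Z / (real N*(x+1) + 1) powr \<alpha> * 2 powr x))
           \<le> Z / (real N*x + 1) powr \<alpha> / 2 powr (x+2)"
    using assms(2,3) by real_asymp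
  from eventually_compose_filterlim[OF this filterlim_real_sequentially] show ?thesis
  proof (rule eventually_mono)
    fix x :: nat
    have pow: "(2::real) powr real k = 2^k" for k by (simp add: powr_realpow)
    assume "2 powr (real N * real x^2) * exp (- (Z / (real N * (real x+1) + 1) powr \<alpha> * 2 powr real x))
           \<le> Z / (real N * real x + 1) powr \<alpha> / 2 powr (real x + 2)"
    moreover have "2 powr (real N * real x^2) = (2::real)^(N*x^2)" using pow[of "N*x^2"] by simp
    moreover have "2 powr (real x + 2) = (2::real)^(x+2)" using pow[of "x+2"] by (simp add: add.commute)
    ultimately show "2^(N*x^2) * exp (- (Z / (real (N*(x+1)) + 1) powr \<alpha> * 2^x))
           \<le> Z / (real (N*x) + 1) powr \<alpha> / 2^(x+2)"
      using pow[of x] by (simp add: algebra_simps)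
  qed
qed

section \<open>Cone percolation\<close>

lemma cp_gen_subset: "[] \<in> T \<Longrightarrow> cp_gen T r k \<subseteq> T"
  by (induction k) (auto simp: cone_def)

lemma infinite_cp_cluster_if_relay:
  assumes "S \<subseteq> T" "[] \<in> S" "strict_mono D" "D 0 = 0" "D 1 \<le> r []"
    and relay: "\<And>j u. u \<in> S \<Longrightarrow> length u = D j \<Longrightarrow>
      \<exists>w\<in>S. prefix u w \<and> length w = D (Suc j) \<and> D (Suc (Suc j)) \<le> length w + r w"
  shows "infinite (cp_cluster T r)"
proof
  have reached: "\<exists>u\<in>S. length u = D j \<and> D (Suc j) \<le> length u + r u \<and> u \<in> cp_gen T r j" for j
  proof (induction j)
    case 0
    show ?case using assms(2,4,5) by (intro bexI[of _ "[]"]) simp_all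
  next
    case (Suc j)
    then obtain u where u: "u \<in> S" "length u = D j" "D (Suc j) \<le> length u + r u" "u \<in> cp_gen T r j"
      by blast
    from relay[OF u(1,2)] obtain w where w: "w \<in> S" "prefix u w" "length w = D (Suc j)"
      "D (Suc (Suc j)) \<le> length w + r w" by blast
    have "w \<in> cone T u (r u)" using w u(3) assms(1) by (auto simp: cone_def)
    then show ?case using w u(4) by auto
  qed
  assume "finite (cp_cluster T r)"
  then obtain B where B: "\<forall>v\<in>cp_cluster T r. length v < B" using finite_maxlen by blast
  obtain u where u: "length u = D B" "u \<in> cp_gen T r B" using reached by blast
  then have "length u < B" using B unfolding cp_cluster_def by blast
  with u(1) strict_mono_imp_increasing[OF assms(3), of B] show False by simp
qed

lemma (in prob_space) cp_gen_event:
  assumes "\<And>v. v \<in> T \<Longrightarrow> R v \<in> measurable M (count_space UNIV)" "[] \<in> T"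
  shows "{\<omega>\<in>space M. v \<in> cp_gen T (\<lambda>v. R v \<omega>) k} \<in> events"
proof (induction k arbitrary: v)
  case 0
  show ?case by (cases "v = []") auto
next
  case (Suc k)
  have "{\<omega>\<in>space M. v \<in> cp_gen T (\<lambda>v. R v \<omega>) (Suc k)} =
    (\<Union>u\<in>T. {\<omega>\<in>space M. u \<in> cp_gen T (\<lambda>v. R v \<omega>) k} \<inter> (R u -` {r. v \<in> cone T u r} \<inter> space M))"
    using cp_gen_subset[OF assms(2)] by auto
  also have "\<dots> \<in> events"
    by (intro sets.countable_UN''[OF countable_subset[OF subset_UNIV]] sets.Int Suc.IH
        measurable_sets[OF assms(1)]) auto
  finally show ?case .
qed

lemma (in prob_space) infinite_cp_cluster_event:
  assumes "\<And>v. v \<in> ssym_tree c \<Longrightarrow> R v \<in> measurable M (count_space UNIV)"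
  shows "{\<omega> \<in> space M. infinite (cp_cluster (ssym_tree c) (\<lambda>v. R v \<omega>))} \<in> events"
proof -
  let ?T = "ssym_tree c"
  let ?deep = "\<lambda>N v k. {\<omega>\<in>space M. N \<le> length v \<and> v \<in> cp_gen ?T (\<lambda>v. R v \<omega>) k}"
  have sub: "cp_cluster ?T (\<lambda>v. R v \<omega>) \<subseteq> ?T" for \<omega>
    using cp_gen_subset[OF Nil_in_ssym_tree] unfolding cp_cluster_def by blast
  have eq: "{\<omega> \<in> space M. infinite (cp_cluster ?T (\<lambda>v. R v \<omega>))} = (\<Inter>N. \<Union>v\<in>?T. \<Union>k. ?deep N v k)"
    unfolding infinite_subset_ssym_tree_iff[OF sub] using cp_gen_subset[OF Nil_in_ssym_tree[of c]]
    by (auto simp: cp_cluster_def; blast)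
  have deep: "?deep N v k \<in> events" for N v k
    using cp_gen_event[OF assms Nil_in_ssym_tree, where v=v and k=k]
    by (cases "N \<le> length v") simp_all
  have "(\<Union>v\<in>?T. \<Union>k. ?deep N v k) \<in> events" for N
  proof (rule sets.countable_UN''[OF countable_subset[OF subset_UNIV]])
    show "(\<Union>k. ?deep N v k) \<in> events" for v
      by (rule sets.countable_UN) (simp add: image_subset_iff deep)
  qed simp
  then show ?thesis unfolding eq by (intro sets.countable_INT) blast+
qed

lemma (in prob_space) prob_none_le_exp:
  assumes indep: "indep_vars (\<lambda>_. count_space UNIV) X I" and "J \<subseteq> I" "finite J"
    and p: "\<And>i. i \<in> J \<Longrightarrow> p \<le> prob {\<omega> \<in> space M. X i \<omega> \<in> A}"
  shows "prob {\<omega> \<in> space M. \<forall>i\<in>J. X i \<omega> \<notin> A} \<le> exp (- p * card J)"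
proof (cases "J = {}")
  case True
  then show ?thesis by (simp add: prob_space)
next
  case False
  have meas: "X i \<in> measurable M (count_space UNIV)" if "i \<in> J" for i
    using indep that \<open>J \<subseteq> I\<close> by (auto simp: indep_vars_def)
  have miss: "prob (X i -` (- A) \<inter> space M) = 1 - prob {\<omega> \<in> space M. X i \<omega> \<in> A}" if "i \<in> J" for i
  proof -
    have "{\<omega> \<in> space M. X i \<omega> \<in> A} \<in> events"
      using pred_sets2[OF _ meas[OF that], of A] by (simp add: pred_def)
    moreover have "X i -` (- A) \<inter> space M = space M - {\<omega> \<in> space M. X i \<omega> \<in> A}" by auto
    ultimately show ?thesis using prob_compl by simp
  qed
  have "prob {\<omega> \<in> space M. \<forall>i\<in>J. X i \<omega> \<notin> A} = prob (\<Inter>i\<in>J. X i -` (- A) \<inter> space M)"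
    using False by (intro arg_cong[where f = prob]) auto
  also have "\<dots> = (\<Prod>i\<in>J. prob (X i -` (- A) \<inter> space M))"
    using False assms(2,3) by (intro indep_varsD[OF indep]) auto
  also have "\<dots> \<le> (\<Prod>i\<in>J. exp (- p))"
  proof (intro prod_mono conjI)
    fix i assume i: "i \<in> J"
    show "0 \<le> prob (X i -` (- A) \<inter> space M)" by simp
    have "prob (X i -` (- A) \<inter> space M) \<le> 1 - p" using miss[OF i] p[OF i] by simp
    also have "\<dots> \<le> exp (- p)" using exp_ge_add_one_self[of "- p"] by simp
    finally show "prob (X i -` (- A) \<inter> space M) \<le> exp (- p)" .
  qed
  also have "\<dots> = exp (- p * card J)" by (simp add: exp_of_nat_mult[symmetric] mult.commute)
  finally show ?thesis .
qed

section \<open>The relay construction\<close>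

locale cone_relay = prob_space M for M :: "'a measure" +
  fixes R :: "nat list \<Rightarrow> 'a \<Rightarrow> nat" and c :: "nat \<Rightarrow> nat" and N K :: nat and \<alpha> Z :: real
  assumes indep: "indep_vars (\<lambda>_. count_space UNIV) R (ssym_tree c)"
    and radius_law: "\<And>v k. v \<in> ssym_tree c \<Longrightarrow> 1 \<le> k \<Longrightarrow>
      prob {\<omega> \<in> space M. R v \<omega> = k} = Z / (real k + 1) powr \<alpha>"
    and branching: "\<forall>i. 1 \<le> c i" and windows: "\<forall>D. \<exists>i<N. 2 \<le> c (D+i)"
    and Z_pos: "0 < Z" and alpha_nonneg: "0 \<le> \<alpha>" and K_pos: "1 \<le> K"
    and tail_beats_branching: "\<And>x. K \<le> x \<Longrightarrow>
      2^(N*x^2) * exp (- (Z / (real (N*(x+1)) + 1) powr \<alpha> * 2^x))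
        \<le> Z / (real (N*x) + 1) powr \<alpha> / 2^(x+2)"
begin

definition radius_prob :: "nat \<Rightarrow> real" where
  "radius_prob k = Z / (real k + 1) powr \<alpha>"

definition block :: "nat \<Rightarrow> nat" where
  "block j = N * (K + j)"

definition level :: "nat \<Rightarrow> nat" where
  "level j = (\<Sum>i<j. block i)"

definition pruned :: "nat list set" where
  "pruned = ssym_tree (\<lambda>i. min (c i) 2)"

definition relay_targets :: "nat \<Rightarrow> nat list \<Rightarrow> nat list set" where
  "relay_targets j u = {w \<in> pruned. prefix u w \<and> length w = level (Suc j)}"

definition stuck :: "nat \<Rightarrow> nat list \<Rightarrow> 'a set" where
  "stuck j u = {\<omega> \<in> space M. \<forall>w\<in>relay_targets j u. R w \<omega> \<notin> {block (Suc j)..}}"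

definition bad :: "nat \<Rightarrow> 'a set" where
  "bad j = (\<Union>u\<in>{v \<in> pruned. length v = level j}. stuck j u)"

lemma block_pos: "0 < block j"
  using windows K_pos by (auto simp: block_def)

lemma level_Suc: "level (Suc j) = level j + block j"
  by (simp add: level_def)

lemma strict_mono_level: "strict_mono level"
  by (rule strict_monoI_Suc) (simp add: level_Suc block_pos)

lemma level_le_square: "level j \<le> N * (K + j)^2"
proof -
  have "level j \<le> (\<Sum>i<j. N * (K + j))"
    unfolding level_def block_def by (intro sum_mono) simp
  also have "\<dots> = j * (N * (K + j))" by simp
  also have "\<dots> \<le> (K + j) * (N * (K + j))" by (intro mult_right_mono) simp_all
  finally show ?thesis by (simp add: power2_eq_square mult_ac)
qed

lemma radius_prob_pos: "0 < radius_prob k"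
  using Z_pos by (simp add: radius_prob_def)

lemma radius_prob_antimono: "m \<le> k \<Longrightarrow> radius_prob k \<le> radius_prob m"
  unfolding radius_prob_def using Z_pos alpha_nonneg
  by (intro divide_left_mono powr_mono2 mult_pos_pos) auto

lemma radius_measurable: "v \<in> ssym_tree c \<Longrightarrow> R v \<in> measurable M (count_space UNIV)"
  using indep by (auto simp: indep_vars_def)

lemma radius_event: "v \<in> ssym_tree c \<Longrightarrow> {\<omega> \<in> space M. R v \<omega> \<in> A} \<in> events"
  using pred_sets2[OF _ radius_measurable, of A v] by (simp add: pred_def)

lemma pruned_subset: "pruned \<subseteq> ssym_tree c"
  by (auto simp: pruned_def ssym_tree_def)

lemma finite_card_pruned_level:
  "finite {v \<in> pruned. length v = n}" "card {v \<in> pruned. length v = n} \<le> 2^n"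
  unfolding pruned_def finite_card_level_ssym_tree(2)
  by (simp_all add: finite_card_level_ssym_tree(1) prod_le_power)

lemma finite_card_relay_targets:
  assumes "u \<in> pruned" "length u = level j"
  shows "finite (relay_targets j u)" and "2^(K+j) \<le> card (relay_targets j u)"
proof -
  have eq: "relay_targets j u = {w \<in> pruned. prefix u w \<and> length w = length u + block j}"
    unfolding relay_targets_def assms(2) level_Suc ..
  show "finite (relay_targets j u)"
    unfolding eq pruned_def using assms(1) by (intro finite_card_descendants_ssym_tree(1)) (simp add: pruned_def)
  have "2^(K+j) \<le> (\<Prod>i<N*(K+j). min (c (level j + i)) 2)"
    using branching windows by (intro prod_ge_pow2_if_windows) auto
  also have "\<dots> = card (relay_targets j u)"
    unfolding eq pruned_def using assms
    by (subst finite_card_descendants_ssym_tree(2)) (simp_all add: pruned_def block_def)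
  finally show "2^(K+j) \<le> card (relay_targets j u)" .
qed

lemma stuck_event: "u \<in> pruned \<Longrightarrow> length u = level j \<Longrightarrow> stuck j u \<in> events"
  unfolding stuck_def
proof (intro sets.sets_Collect_finite_All finite_card_relay_targets(1))
  fix w assume "w \<in> relay_targets j u"
  then have "w \<in> ssym_tree c" using pruned_subset by (auto simp: relay_targets_def)
  from radius_event[OF this, of "- {block (Suc j)..}"]
  show "{\<omega> \<in> space M. R w \<omega> \<notin> {block (Suc j)..}} \<in> events" by (simp add: not_le)
qed

lemma prob_stuck_le:
  assumes "u \<in> pruned" "length u = level j"
  shows "prob (stuck j u) \<le> exp (- radius_prob (block (Suc j)) * 2^(K+j))"
proof -
  let ?m = "block (Suc j)"
  have "prob (stuck j u) \<le> exp (- radius_prob ?m * card (relay_targets j u))"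
    unfolding stuck_def
  proof (rule prob_none_le_exp[OF indep])
    show targets: "relay_targets j u \<subseteq> ssym_tree c"
      using pruned_subset by (auto simp: relay_targets_def)
    show "finite (relay_targets j u)" by (rule finite_card_relay_targets(1)[OF assms])
    fix w assume "w \<in> relay_targets j u"
    then have w: "w \<in> ssym_tree c" using targets by blast
    have "radius_prob ?m = prob {\<omega> \<in> space M. R w \<omega> = ?m}"
      using radius_law[OF w] block_pos[of "Suc j"] by (simp add: radius_prob_def)
    also have "\<dots> \<le> prob {\<omega> \<in> space M. R w \<omega> \<in> {?m..}}"
      using radius_event[OF w, of "{?m..}"] by (intro finite_measure_mono) auto
    finally show "radius_prob ?m \<le> prob {\<omega> \<in> space M. R w \<omega> \<in> {?m..}}" .
  qed
  also have "\<dots> \<le> exp (- radius_prob ?m * 2^(K+j))"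
  proof -
    have "(2::real)^(K+j) \<le> card (relay_targets j u)"
      using finite_card_relay_targets(2)[OF assms] by (metis of_nat_le_iff of_nat_numeral of_nat_power)
    then show ?thesis using radius_prob_pos[of ?m] by (simp add: mult_left_mono)
  qed
  finally show ?thesis .
qed

lemma bad_event: "bad j \<in> events"
  unfolding bad_def using finite_card_pruned_level(1) stuck_event by (intro sets.finite_UN) auto

lemma prob_bad_le: "prob (bad j) \<le> radius_prob (block 0) / 2^(j+2)"
proof -
  let ?x = "K + j" and ?level = "{v \<in> pruned. length v = level j}"
  have "prob (bad j) \<le> (\<Sum>u\<in>?level. prob (stuck j u))"
    unfolding bad_def using finite_card_pruned_level(1) stuck_event
    by (intro finite_measure_subadditive_finite) auto
  also have "\<dots> \<le> (\<Sum>u\<in>?level. exp (- radius_prob (block (Suc j)) * 2^?x))"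
    by (intro sum_mono prob_stuck_le) auto
  also have "\<dots> \<le> 2^(N*?x^2) * exp (- radius_prob (block (Suc j)) * 2^?x)"
  proof -
    have "(2::nat)^level j \<le> 2^(N*?x^2)" by (rule power_increasing[OF level_le_square]) simp
    then have "card ?level \<le> 2^(N*?x^2)" using finite_card_pruned_level(2)[of "level j"] by linarith
    then have "real (card ?level) \<le> 2^(N*?x^2)" by (metis of_nat_le_iff of_nat_numeral of_nat_power)
    then show ?thesis by (simp add: mult_right_mono)
  qed
  also have "\<dots> \<le> radius_prob (block j) / 2^(?x+2)"
    using tail_beats_branching[of ?x] by (simp add: radius_prob_def block_def algebra_simps)
  also have "\<dots> \<le> radius_prob (block 0) / 2^(j+2)"
    using radius_prob_pos[of "block 0"] radius_prob_antimono[of "block 0" "block j"]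
    by (intro frac_le power_increasing) (simp_all add: block_def)
  finally show ?thesis .
qed

lemma prob_Union_bad_le: "prob (\<Union>j. bad j) \<le> radius_prob (block 0) / 2"
proof -
  let ?p = "radius_prob (block 0)"
  have sums: "(\<lambda>j. ?p / 2^(j+2)) sums (?p / 2)"
    using sums_mult[OF geometric_sums[of "1/2::real"], of "?p/4"]
    by (simp add: power_add power_divide field_simps)
  then have summable: "summable (\<lambda>j. prob (bad j))"
    by (rule summable_comparison_test'[OF sums_summable, where N=0]) (use prob_bad_le in simp)
  have "prob (\<Union>j. bad j) \<le> (\<Sum>j. prob (bad j))"
    using bad_event summable by (intro finite_measure_subadditive_countably) auto
  also have "\<dots> \<le> ?p / 2"
    by (rule sums_le[OF prob_bad_le summable_sums[OF summable] sums])
  finally show ?thesis .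
qed

lemma start_not_bad_subset_survival:
  "{\<omega> \<in> space M. R [] \<omega> = block 0} - (\<Union>j. bad j)
     \<subseteq> {\<omega> \<in> space M. infinite (cp_cluster (ssym_tree c) (\<lambda>v. R v \<omega>))}"
proof
  fix \<omega> assume \<omega>: "\<omega> \<in> {\<omega> \<in> space M. R [] \<omega> = block 0} - (\<Union>j. bad j)"
  have "infinite (cp_cluster (ssym_tree c) (\<lambda>v. R v \<omega>))"
  proof (rule infinite_cp_cluster_if_relay[OF pruned_subset _ strict_mono_level])
    show "[] \<in> pruned" by (simp add: pruned_def)
    show "level 0 = 0" "level 1 \<le> R [] \<omega>" using \<omega> by (simp_all add: level_def)
    fix j u assume u: "u \<in> pruned" "length u = level j"
    with \<omega> obtain w where "w \<in> relay_targets j u" "block (Suc j) \<le> R w \<omega>"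
      by (auto simp: bad_def stuck_def)
    then show "\<exists>w\<in>pruned. prefix u w \<and> length w = level (Suc j) \<and> level (Suc (Suc j)) \<le> length w + R w \<omega>"
      by (auto simp: relay_targets_def level_Suc[of "Suc j"])
  qed
  then show "\<omega> \<in> {\<omega> \<in> space M. infinite (cp_cluster (ssym_tree c) (\<lambda>v. R v \<omega>))}"
    using \<omega> by simp
qed

theorem prob_infinite_cp_cluster_pos:
  "0 < prob {\<omega> \<in> space M. infinite (cp_cluster (ssym_tree c) (\<lambda>v. R v \<omega>))}"
proof -
  let ?start = "{\<omega> \<in> space M. R [] \<omega> = block 0}" and ?bad = "\<Union>j. bad j"
  have start: "?start \<in> events"
    using radius_event[OF Nil_in_ssym_tree, of "{block 0}"] by simp
  have bad: "?bad \<in> events" using bad_event by blast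
  have "prob ?start = radius_prob (block 0)"
    using radius_law[OF Nil_in_ssym_tree] block_pos[of 0] by (simp add: radius_prob_def)
  then have "0 < prob ?start - prob ?bad"
    using prob_Union_bad_le radius_prob_pos[of "block 0"] by linarith
  also have "\<dots> \<le> prob ?start - prob (?start \<inter> ?bad)"
    using finite_measure_mono[OF Int_lower2 bad] by simp
  also have "\<dots> = prob (?start - ?bad)"
    by (rule finite_measure_Diff'[OF start bad, symmetric])
  also have "\<dots> \<le> prob {\<omega> \<in> space M. infinite (cp_cluster (ssym_tree c) (\<lambda>v. R v \<omega>))}"
    by (rule finite_measure_mono[OF start_not_bad_subset_survival
          infinite_cp_cluster_event[OF radius_measurable]])
  finally show ?thesis .
qed

end

theorem corollary4:
  fixes c :: "nat \<Rightarrow> nat" and M :: "'a measure"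
    and R :: "nat list \<Rightarrow> 'a \<Rightarrow> nat" and \<alpha> Z L :: real
  assumes "prob_space M"
    and "prob_space.indep_vars M (\<lambda>_. count_space UNIV) R (ssym_tree c)"
    and "\<alpha> > 1" and "Z > 0"
    and "\<And>v k. v \<in> ssym_tree c \<Longrightarrow> k \<ge> 1 \<Longrightarrow>
           measure M {\<omega> \<in> space M. R v \<omega> = k} = Z / (real k + 1) powr \<alpha>"
    and "\<And>v. v \<in> ssym_tree c \<Longrightarrow> measure M {\<omega> \<in> space M. R v \<omega> = 0} > 0"
    and "\<And>v. v \<in> ssym_tree c \<Longrightarrow> measure M {\<omega> \<in> space M. R v \<omega> = 0} < 1"
    and "dim_inf_seq (ssym_tree c) \<longlonglongrightarrow> L"
    and "L > 0"
  shows "measure M {\<omega> \<in> space M. infinite (cp_cluster (ssym_tree c) (\<lambda>v. R v \<omega>))} > 0"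
proof -
  note branching = ssym_tree_branching_if_dim_inf_pos[OF assms(8,9)]
  obtain N where windows: "\<forall>D. \<exists>i<N. 2 \<le> c (D+i)" using branching(2) by blast
  then obtain i where "i < N" by blast
  then obtain K0 where K0: "\<And>x. K0 \<le> x \<Longrightarrow>
      2^(N*x^2) * exp (- (Z / (real (N*(x+1)) + 1) powr \<alpha> * 2^x)) \<le> Z / (real (N*x) + 1) powr \<alpha> / 2^(x+2)"
    using polynomial_tail_beats_branching[of N Z \<alpha>] assms(3,4) by (auto simp: eventually_sequentially)
  interpret cone_relay M R c N "max K0 1" \<alpha> Z
  proof (rule cone_relay.intro[OF assms(1)], unfold_locales)
    show "prob_space.indep_vars M (\<lambda>_. count_space UNIV) R (ssym_tree c)" by (fact assms(2))
    show "2^(N*x^2) * exp (- (Z / (real (N*(x+1)) + 1) powr \<alpha> * 2^x))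
      \<le> Z / (real (N*x) + 1) powr \<alpha> / 2^(x+2)" if "max K0 1 \<le> x" for x
      using that by (intro K0) simp
  qed (use assms(3-5) branching(1) windows in auto)
  show ?thesis by (rule prob_infinite_cp_cluster_pos)
qed

end
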